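(* Let $(X,d_X)$ and $(Y,d_Y)$ be nonempty finite metric spaces. Then $\overline{d_{\mathrm{GH}}}((X,d_X),(Y,d_Y))=0$ if and only if either there exists $c^*>0$ such that $(X,c^*d_X)$ is isometric to $(Y,d_Y)$, or $(Y,d_Y)$ is a one-point space.
   Context: The Gromov–Hausdorff distance is $d_{\mathrm{GH}}((X,d_X),(Y,d_Y))=\tfrac12\inf_{R}\sup_{(x,y),(x',y')\in R}|d_X(x,x')-d_Y(y,y')|$, the infimum over correspondences $R\subseteq X\times Y$ (relations whose projections onto $X$ and onto $Y$ are surjective). Define $\overline{d_{\mathrm{GH}}}((X,d_X),(Y,d_Y))=\inf_{c>0}d_{\mathrm{GH}}((X,c\,d_X),(Y,d_Y))$. *)

theory Defs
  imports Complex_Main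
begin

definition metric_on :: "'a set \<Rightarrow> ('a \<Rightarrow> 'a \<Rightarrow> real) \<Rightarrow> bool" where
  "metric_on X d \<longleftrightarrow>
     (\<forall>x\<in>X. \<forall>y\<in>X. d x y \<ge> 0) \<and>
     (\<forall>x\<in>X. \<forall>y\<in>X. d x y = 0 \<longleftrightarrow> x = y) \<and>
     (\<forall>x\<in>X. \<forall>y\<in>X. d x y = d y x) \<and>
     (\<forall>x\<in>X. \<forall>y\<in>X. \<forall>z\<in>X. d x z \<le> d x y + d y z)"

definition correspondence :: "'a set \<Rightarrow> 'b set \<Rightarrow> ('a \<times> 'b) set \<Rightarrow> bool" where
  "correspondence X Y R \<longleftrightarrow> R \<subseteq> X \<times> Y \<and> fst ` R = X \<and> snd ` R = Y"

definition distortion ::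
  "('a \<Rightarrow> 'a \<Rightarrow> real) \<Rightarrow> ('b \<Rightarrow> 'b \<Rightarrow> real) \<Rightarrow> ('a \<times> 'b) set \<Rightarrow> real" where
  "distortion dX dY R =
     (SUP p \<in> R \<times> R. \<bar>dX (fst (fst p)) (fst (snd p)) - dY (snd (fst p)) (snd (snd p))\<bar>)"

definition dGH ::
  "'a set \<Rightarrow> ('a \<Rightarrow> 'a \<Rightarrow> real) \<Rightarrow> 'b set \<Rightarrow> ('b \<Rightarrow> 'b \<Rightarrow> real) \<Rightarrow> real" where
  "dGH X dX Y dY = (1/2) * (INF R \<in> {R. correspondence X Y R}. distortion dX dY R)"

definition dGH_bar ::
  "'a set \<Rightarrow> ('a \<Rightarrow> 'a \<Rightarrow> real) \<Rightarrow> 'b set \<Rightarrow> ('b \<Rightarrow> 'b \<Rightarrow> real) \<Rightarrow> real" where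
  "dGH_bar X dX Y dY = (INF c \<in> {c::real. c > 0}. dGH X (\<lambda>x x'. c * dX x x') Y dY)"

definition isometric ::
  "'a set \<Rightarrow> ('a \<Rightarrow> 'a \<Rightarrow> real) \<Rightarrow> 'b set \<Rightarrow> ('b \<Rightarrow> 'b \<Rightarrow> real) \<Rightarrow> bool" where
  "isometric X dX Y dY \<longleftrightarrow>
     (\<exists>f. bij_betw f X Y \<and> (\<forall>x\<in>X. \<forall>x'\<in>X. dY (f x) (f x') = dX x x'))"

end

theory Submission
  imports Defs
begin

text \<open>A finite pair of spaces admits only finitely many correspondences, so if
  \<open>dGH_bar = 0\<close> a single correspondence \<open>R\<close> has scaled distortion arbitrarily close
  to \<open>0\<close>. When \<open>Y\<close> has two points, a pair of \<open>R\<close> with positive \<open>Y\<close>-distance forces the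
  admissible scales to converge to one \<open>c\<close>, and in the limit \<open>c * dX = dY\<close> exactly along
  \<open>R\<close>; for metrics this makes \<open>R\<close> the graph of an isometry. Conversely the graph of an
  isometry has distortion \<open>0\<close>, and onto a single point every scale \<open>c\<close> has distortion
  at most \<open>c * diam X\<close>.\<close>

lemma metric_on_scale:
  assumes "metric_on X d" "c > 0"
  shows "metric_on X (\<lambda>x x'. c * d x x')"
  using assms unfolding metric_on_def by (auto simp flip: distrib_left intro: mult_left_mono)

lemma finite_correspondences:
  assumes "finite X" "finite Y"
  shows "finite {R. correspondence X Y R}"
proof (rule finite_subset)
  show "{R. correspondence X Y R} \<subseteq> Pow (X \<times> Y)" unfolding correspondence_def by auto
qed (use assms in simp)

lemma correspondence_finite:
  "finite X \<Longrightarrow> finite Y \<Longrightarrow> correspondence X Y R \<Longrightarrow> finite R"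
  unfolding correspondence_def by (meson finite_SigmaI finite_subset)

lemma correspondence_nonempty: "X \<noteq> {} \<Longrightarrow> correspondence X Y R \<Longrightarrow> R \<noteq> {}"
  unfolding correspondence_def by auto

lemma correspondence_Times: "correspondence X Y (X \<times> Y) \<longleftrightarrow> (X = {} \<longleftrightarrow> Y = {})"
  unfolding correspondence_def by auto

lemma correspondence_graph: "f ` X = Y \<Longrightarrow> correspondence X Y ((\<lambda>x. (x, f x)) ` X)"
  unfolding correspondence_def by (auto simp: image_image)

lemma distortion_ge:
  assumes "finite R" "p \<in> R" "q \<in> R"
  shows "\<bar>dX (fst p) (fst q) - dY (snd p) (snd q)\<bar> \<le> distortion dX dY R"
  unfolding distortion_def using assms
  by (intro cSUP_upper2[where x = "(p, q)"] bdd_above_finite) auto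

lemma distortion_le:
  assumes "R \<noteq> {}"
    and "\<And>p q. p \<in> R \<Longrightarrow> q \<in> R \<Longrightarrow> \<bar>dX (fst p) (fst q) - dY (snd p) (snd q)\<bar> \<le> B"
  shows "distortion dX dY R \<le> B"
  unfolding distortion_def using assms by (intro cSUP_least) auto

lemma distortion_nonneg: "finite R \<Longrightarrow> R \<noteq> {} \<Longrightarrow> 0 \<le> distortion dX dY R"
  using distortion_ge by (metis abs_ge_zero all_not_in_conv order_trans)

lemma bdd_below_distortion_correspondences:
  assumes "finite X" "finite Y" "X \<noteq> {}"
  shows "bdd_below (distortion dX dY ` {R. correspondence X Y R})"
proof (rule bdd_belowI[of _ 0])
  fix r assume "r \<in> distortion dX dY ` {R. correspondence X Y R}"
  then obtain R where "correspondence X Y R" "r = distortion dX dY R" by blast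
  with assms show "0 \<le> r"
    by (simp add: distortion_nonneg correspondence_finite correspondence_nonempty)
qed

lemma dGH_le_distortion:
  assumes "finite X" "finite Y" "X \<noteq> {}" "correspondence X Y R"
  shows "dGH X dX Y dY \<le> distortion dX dY R / 2"
proof -
  have "(INF R \<in> {R. correspondence X Y R}. distortion dX dY R) \<le> distortion dX dY R"
    using assms by (intro cINF_lower bdd_below_distortion_correspondences) auto
  thus ?thesis unfolding dGH_def by simp
qed

lemma dGH_nonneg:
  assumes "finite X" "finite Y" "X \<noteq> {}" "Y \<noteq> {}"
  shows "0 \<le> dGH X dX Y dY"
  unfolding dGH_def
proof (intro mult_nonneg_nonneg cINF_greatest)
  show "{R. correspondence X Y R} \<noteq> {}" using assms correspondence_Times[of X Y] by auto
  show "0 \<le> distortion dX dY R" if "R \<in> {R. correspondence X Y R}" for R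
    using that assms by (simp add: distortion_nonneg correspondence_finite correspondence_nonempty)
qed simp

lemma dGH_less_imp_distortion_less:
  assumes "finite X" "finite Y" "X \<noteq> {}" "Y \<noteq> {}" "dGH X dX Y dY < e"
  shows "\<exists>R. correspondence X Y R \<and> distortion dX dY R < 2 * e"
proof -
  have "(INF R \<in> {R. correspondence X Y R}. distortion dX dY R) < 2 * e"
    using assms(5) unfolding dGH_def by simp
  moreover have "{R. correspondence X Y R} \<noteq> {}"
    using assms correspondence_Times[of X Y] by auto
  ultimately show ?thesis
    using assms by (auto simp: cINF_less_iff bdd_below_distortion_correspondences)
qed

lemma dGH_bar_le:
  assumes "finite X" "finite Y" "X \<noteq> {}" "Y \<noteq> {}" "c > 0"
  shows "dGH_bar X dX Y dY \<le> dGH X (\<lambda>x x'. c * dX x x') Y dY"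
  unfolding dGH_bar_def using assms
  by (intro cINF_lower) (auto intro!: bdd_belowI[of _ 0] dGH_nonneg)

lemma dGH_bar_nonneg:
  assumes "finite X" "finite Y" "X \<noteq> {}" "Y \<noteq> {}"
  shows "0 \<le> dGH_bar X dX Y dY"
  unfolding dGH_bar_def using assms
  by (intro cINF_greatest) (auto intro!: dGH_nonneg gt_ex)

lemma dGH_bar_less_imp_dGH_less:
  assumes "finite X" "finite Y" "X \<noteq> {}" "Y \<noteq> {}" "dGH_bar X dX Y dY < e"
  shows "\<exists>c>0. dGH X (\<lambda>x x'. c * dX x x') Y dY < e"
proof -
  have "bdd_below ((\<lambda>c. dGH X (\<lambda>x x'. c * dX x x') Y dY) ` {c. c > 0})"
    using assms by (auto intro!: bdd_belowI[of _ 0] dGH_nonneg)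
  moreover have "{c::real. c > 0} \<noteq> {}" by (auto intro: gt_ex)
  ultimately show ?thesis
    using assms(5) unfolding dGH_bar_def by (subst (asm) cINF_less_iff) auto
qed

lemma finite_ex_arbitrarily_small:
  fixes f :: "'c \<Rightarrow> 'a \<Rightarrow> real"
  assumes "finite S" and small: "\<And>e. e > 0 \<Longrightarrow> \<exists>s\<in>S. \<exists>c\<in>C. f c s < e"
  shows "\<exists>s\<in>S. \<forall>e>0. \<exists>c\<in>C. f c s < e"
proof (rule ccontr)
  assume "\<not> ?thesis"
  hence "\<forall>s\<in>S. \<exists>e>0. \<forall>c\<in>C. e \<le> f c s" by (meson not_le)
  then obtain g where g: "\<And>s. s \<in> S \<Longrightarrow> g s > 0 \<and> (\<forall>c\<in>C. g s \<le> f c s)"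
    by metis
  have "S \<noteq> {}" using small[of 1] by auto
  hence "Min (g ` S) > 0" using assms(1) g by simp
  then obtain s c where s: "s \<in> S" "c \<in> C" "f c s < Min (g ` S)" using small by blast
  moreover have "Min (g ` S) \<le> g s" using assms(1) s(1) by simp
  ultimately show False using g by force
qed

lemma dGH_bar_eq_0_imp_ex_correspondence:
  assumes "finite X" "finite Y" "X \<noteq> {}" "Y \<noteq> {}" "dGH_bar X dX Y dY = 0"
  shows "\<exists>R. correspondence X Y R \<and>
           (\<forall>e>0. \<exists>c>0. distortion (\<lambda>x x'. c * dX x x') dY R < e)"
proof -
  have "\<exists>R\<in>{R. correspondence X Y R}. \<exists>c\<in>{c. c > 0}.
          distortion (\<lambda>x x'. c * dX x x') dY R < e" if "e > 0" for e
  proof -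
    obtain c where c: "c > 0" "dGH X (\<lambda>x x'. c * dX x x') Y dY < e / 2"
      using dGH_bar_less_imp_dGH_less[OF assms(1-4)] assms(5) \<open>e > 0\<close> by (metis half_gt_zero)
    then obtain R where "correspondence X Y R" "distortion (\<lambda>x x'. c * dX x x') dY R < e"
      using dGH_less_imp_distortion_less[OF assms(1-4)] by fastforce
    thus ?thesis using c(1) by blast
  qed
  from finite_ex_arbitrarily_small[OF finite_correspondences[OF assms(1,2)] this]
  show ?thesis by auto
qed

lemma eq_scale_of_approx:
  fixes a a' b b' :: real
  assumes a: "a > 0" and a': "a' \<ge> 0"
    and approx: "\<And>e. e > 0 \<Longrightarrow> \<exists>c. \<bar>c * a - b\<bar> < e \<and> \<bar>c * a' - b'\<bar> < e"
  shows "b / a * a' = b'"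
proof -
  define K where "K = a' / a + 1"
  have K: "K > 0" unfolding K_def using a a' by (simp add: add_nonneg_pos)
  have bound: "\<bar>b / a * a' - b'\<bar> \<le> e * K" if "e > 0" for e
  proof -
    obtain c where c: "\<bar>c * a - b\<bar> < e" "\<bar>c * a' - b'\<bar> < e" using approx \<open>e > 0\<close> by blast
    have "b / a * a' - b' = (b - c * a) / a * a' + (c * a' - b')"
      using a by (simp add: field_simps)
    also have "\<bar>\<dots>\<bar> \<le> \<bar>b - c * a\<bar> / a * a' + \<bar>c * a' - b'\<bar>"
      using abs_triangle_ineq[of "(b - c * a) / a * a'" "c * a' - b'"] a a'
      by (simp add: abs_mult)
    also have "\<dots> \<le> e / a * a' + e"
      using c a a' by (intro add_mono mult_right_mono divide_right_mono) (auto simp: abs_minus_commute)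
    finally show ?thesis by (simp add: K_def algebra_simps)
  qed
  have "\<bar>b / a * a' - b'\<bar> \<le> 0 + e" if "e > 0" for e
    using bound[of "e / K"] K that by simp
  hence "\<bar>b / a * a' - b'\<bar> \<le> 0" by (rule field_le_epsilon)
  thus ?thesis by simp
qed

lemma uniform_scale_of_approx:
  fixes dX :: "'a \<Rightarrow> 'a \<Rightarrow> real" and dY :: "'b \<Rightarrow> 'b \<Rightarrow> real"
  assumes nonneg: "\<And>p q. p \<in> R \<Longrightarrow> q \<in> R \<Longrightarrow> dX (fst p) (fst q) \<ge> 0"
    and u: "u \<in> R" "v \<in> R" "dY (snd u) (snd v) > 0"
    and approx: "\<And>e. e > 0 \<Longrightarrow>
      \<exists>c. \<forall>p\<in>R. \<forall>q\<in>R. \<bar>c * dX (fst p) (fst q) - dY (snd p) (snd q)\<bar> < e"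
  shows "\<exists>c>0. \<forall>p\<in>R. \<forall>q\<in>R. c * dX (fst p) (fst q) = dY (snd p) (snd q)"
proof -
  define a b where "a = dX (fst u) (fst v)" and "b = dY (snd u) (snd v)"
  have "a > 0"
  proof -
    obtain c where "\<bar>c * a - b\<bar> < b" using approx[of b] u unfolding a_def b_def by blast
    moreover have "a \<ge> 0" unfolding a_def using nonneg u by blast
    ultimately show ?thesis by (cases "a = 0") auto
  qed
  have "b / a * dX (fst p) (fst q) = dY (snd p) (snd q)" if "p \<in> R" "q \<in> R" for p q
  proof (rule eq_scale_of_approx[OF \<open>a > 0\<close> nonneg[OF that]])
    fix e :: real assume "e > 0"
    then obtain c where "\<forall>p\<in>R. \<forall>q\<in>R. \<bar>c * dX (fst p) (fst q) - dY (snd p) (snd q)\<bar> < e"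
      using approx by blast
    thus "\<exists>c. \<bar>c * a - b\<bar> < e \<and> \<bar>c * dX (fst p) (fst q) - dY (snd p) (snd q)\<bar> < e"
      using that u unfolding a_def b_def by blast
  qed
  moreover have "b / a > 0" using \<open>a > 0\<close> u(3) unfolding b_def by simp
  ultimately show ?thesis by blast
qed

lemma isometric_of_correspondence:
  assumes dX: "metric_on X dX" and dY: "metric_on Y dY" and R: "correspondence X Y R"
    and preserve: "\<And>p q. p \<in> R \<Longrightarrow> q \<in> R \<Longrightarrow> dX (fst p) (fst q) = dY (snd p) (snd q)"
  shows "isometric X dX Y dY"
proof -
  have R_sub: "R \<subseteq> X \<times> Y" and R_fst: "fst ` R = X" and R_snd: "snd ` R = Y"
    using R unfolding correspondence_def by auto
  have R_eq: "x = x' \<longleftrightarrow> y = y'" if "(x, y) \<in> R" "(x', y') \<in> R" for x y x' y'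
    using preserve[OF that] that R_sub dX dY unfolding metric_on_def
    by (metis SigmaD1 SigmaD2 fst_conv snd_conv subsetD)
  define f where "f x = (SOME y. (x, y) \<in> R)" for x
  have graph: "(x, f x) \<in> R" if "x \<in> X" for x
    unfolding f_def using that R_fst by (auto intro: someI)
  have "inj_on f X"
    using graph R_eq by (metis inj_onI)
  moreover have "f ` X = Y"
  proof
    show "f ` X \<subseteq> Y" using graph R_sub by auto
    show "Y \<subseteq> f ` X"
    proof
      fix y assume "y \<in> Y"
      then obtain x where "(x, y) \<in> R" using R_snd by force
      moreover have "x \<in> X" using calculation R_sub by auto
      ultimately show "y \<in> f ` X" using graph R_eq by blast
    qed
  qed
  moreover have "dY (f x) (f x') = dX x x'" if "x \<in> X" "x' \<in> X" for x x'
    using preserve[OF graph graph] that by simp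
  ultimately show ?thesis unfolding isometric_def by (blast intro: bij_betw_imageI)
qed

lemma dGH_bar_eq_0_if_isometric:
  assumes "finite X" "finite Y" "X \<noteq> {}" "c > 0"
    and "isometric X (\<lambda>x x'. c * dX x x') Y dY"
  shows "dGH_bar X dX Y dY = 0"
proof -
  obtain f where f: "bij_betw f X Y"
    and iso: "\<And>x x'. x \<in> X \<Longrightarrow> x' \<in> X \<Longrightarrow> dY (f x) (f x') = c * dX x x'"
    using assms(5) unfolding isometric_def by blast
  have "Y \<noteq> {}" using f assms(3) bij_betw_empty2 by blast
  have corr: "correspondence X Y ((\<lambda>x. (x, f x)) ` X)"
    using f by (simp add: bij_betw_def correspondence_graph)
  have "distortion (\<lambda>x x'. c * dX x x') dY ((\<lambda>x. (x, f x)) ` X) \<le> 0"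
    using assms(3) iso by (intro distortion_le) auto
  hence "dGH X (\<lambda>x x'. c * dX x x') Y dY \<le> 0"
    using dGH_le_distortion[OF assms(1-3) corr, of "\<lambda>x x'. c * dX x x'" dY] by simp
  thus ?thesis
    using dGH_bar_le[OF assms(1-3) \<open>Y \<noteq> {}\<close> assms(4), of dX dY]
      dGH_bar_nonneg[OF assms(1-3) \<open>Y \<noteq> {}\<close>, of dX dY]
    by simp
qed

lemma dGH_bar_singleton:
  assumes X: "finite X" "X \<noteq> {}" "metric_on X dX" and "dY y y = 0"
  shows "dGH_bar X dX {y} dY = 0"
proof -
  define M where "M = Max (case_prod dX ` (X \<times> X))"
  have dX_nonneg: "0 \<le> dX x x'" if "x \<in> X" "x' \<in> X" for x x'
    using X(3) that unfolding metric_on_def by blast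
  have le_M: "dX x x' \<le> M" if "x \<in> X" "x' \<in> X" for x x'
    unfolding M_def using X(1) that by (intro Max_ge) (auto intro: image_eqI[of _ _ "(x, x')"])
  have "M \<ge> 0" using X(2) dX_nonneg le_M by (meson all_not_in_conv order_trans)
  have bound: "dGH_bar X dX {y} dY \<le> c * M / 2" if "c > 0" for c
  proof -
    have "distortion (\<lambda>x x'. c * dX x x') dY (X \<times> {y}) \<le> c * M"
    proof (rule distortion_le)
      fix p q assume "p \<in> X \<times> {y}" "q \<in> X \<times> {y}"
      then have pq: "fst p \<in> X" "fst q \<in> X" "snd p = y" "snd q = y" by auto
      have "0 \<le> c * dX (fst p) (fst q)"
        using dX_nonneg[OF pq(1,2)] \<open>c > 0\<close> by simp
      moreover have "c * dX (fst p) (fst q) \<le> c * M"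
        using le_M[OF pq(1,2)] \<open>c > 0\<close> by simp
      ultimately show "\<bar>c * dX (fst p) (fst q) - dY (snd p) (snd q)\<bar> \<le> c * M"
        using pq(3,4) \<open>dY y y = 0\<close> by simp
    qed (use X(2) in simp)
    moreover have "correspondence X {y} (X \<times> {y})" using X(2) correspondence_Times by blast
    then have "dGH X (\<lambda>x x'. c * dX x x') {y} dY
        \<le> distortion (\<lambda>x x'. c * dX x x') dY (X \<times> {y}) / 2"
      using X by (intro dGH_le_distortion) auto
    moreover have "dGH_bar X dX {y} dY \<le> dGH X (\<lambda>x x'. c * dX x x') {y} dY"
      using X that by (intro dGH_bar_le) auto
    ultimately show ?thesis by linarith
  qed
  have "dGH_bar X dX {y} dY \<le> 0 + e" if "e > 0" for e
  proof -
    define c where "c = e / (M + 1)"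
    have "c > 0" unfolding c_def using \<open>M \<ge> 0\<close> \<open>e > 0\<close> by simp
    have "c * M = e * (M / (M + 1))" unfolding c_def by simp
    also have "\<dots> \<le> e"
      using \<open>M \<ge> 0\<close> \<open>e > 0\<close> by (intro mult_left_le) auto
    finally show ?thesis using bound[OF \<open>c > 0\<close>] \<open>e > 0\<close> by linarith
  qed
  hence "dGH_bar X dX {y} dY \<le> 0" by (rule field_le_epsilon)
  thus ?thesis using dGH_bar_nonneg[OF X(1) _ X(2), of "{y}" dX dY] by simp
qed

lemma isometric_scale_of_vanishing_distortion:
  assumes "finite X" "metric_on X dX" "finite Y" "metric_on Y dY" and R: "correspondence X Y R"
    and small: "\<And>e. e > 0 \<Longrightarrow> \<exists>c>0. distortion (\<lambda>x x'. c * dX x x') dY R < e"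
    and "y \<in> Y" "y' \<in> Y" "y \<noteq> y'"
  shows "\<exists>c>0. isometric X (\<lambda>x x'. c * dX x x') Y dY"
proof -
  obtain u v where uv: "u \<in> R" "v \<in> R" and "snd u = y" "snd v = y'"
    using R \<open>y \<in> Y\<close> \<open>y' \<in> Y\<close> unfolding correspondence_def by force
  with assms(4,7-9) have "dY (snd u) (snd v) > 0"
    unfolding metric_on_def by (metis order_neq_le_trans)
  have "\<exists>c>0. \<forall>p\<in>R. \<forall>q\<in>R. c * dX (fst p) (fst q) = dY (snd p) (snd q)"
  proof (rule uniform_scale_of_approx[where u = u and v = v and dY = dY])
    show "dX (fst p) (fst q) \<ge> 0" if "p \<in> R" "q \<in> R" for p q
      using that R assms(2) unfolding correspondence_def metric_on_def by blast
    show "\<exists>c. \<forall>p\<in>R. \<forall>q\<in>R. \<bar>c * dX (fst p) (fst q) - dY (snd p) (snd q)\<bar> < e" if "e > 0" for e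
      using small[OF that] distortion_ge[OF correspondence_finite[OF assms(1,3) R]]
      by (meson order_le_less_trans)
  qed (use uv \<open>dY (snd u) (snd v) > 0\<close> in auto)
  then obtain c where "c > 0"
    and exact: "\<And>p q. p \<in> R \<Longrightarrow> q \<in> R \<Longrightarrow> c * dX (fst p) (fst q) = dY (snd p) (snd q)"
    by blast
  have "isometric X (\<lambda>x x'. c * dX x x') Y dY"
    by (rule isometric_of_correspondence[OF metric_on_scale[OF assms(2) \<open>c > 0\<close>] assms(4) R])
      (simp add: exact)
  with \<open>c > 0\<close> show ?thesis by blast
qed

theorem mainTheorem4:
  fixes X :: "'a set" and dX :: "'a \<Rightarrow> 'a \<Rightarrow> real"
    and Y :: "'b set" and dY :: "'b \<Rightarrow> 'b \<Rightarrow> real"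
  assumes "finite X" "X \<noteq> {}" "metric_on X dX"
    and "finite Y" "Y \<noteq> {}" "metric_on Y dY"
  shows "dGH_bar X dX Y dY = 0 \<longleftrightarrow>
           ((\<exists>c>0. isometric X (\<lambda>x x'. c * dX x x') Y dY) \<or> (\<exists>y. Y = {y}))"
proof
  assume "dGH_bar X dX Y dY = 0"
  then obtain R where R: "correspondence X Y R"
    and small: "\<And>e. e > 0 \<Longrightarrow> \<exists>c>0. distortion (\<lambda>x x'. c * dX x x') dY R < e"
    using dGH_bar_eq_0_imp_ex_correspondence[OF assms(1,4,2,5)] by blast
  show "(\<exists>c>0. isometric X (\<lambda>x x'. c * dX x x') Y dY) \<or> (\<exists>y. Y = {y})"
  proof (rule disjCI)
    assume "\<nexists>y. Y = {y}"
    then obtain y y' where "y \<in> Y" "y' \<in> Y" "y \<noteq> y'" using assms(5) by blast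
    with isometric_scale_of_vanishing_distortion[OF assms(1,3,4,6) R small]
    show "\<exists>c>0. isometric X (\<lambda>x x'. c * dX x x') Y dY" by blast
  qed
next
  assume "(\<exists>c>0. isometric X (\<lambda>x x'. c * dX x x') Y dY) \<or> (\<exists>y. Y = {y})"
  then show "dGH_bar X dX Y dY = 0"
  proof
    assume "\<exists>c>0. isometric X (\<lambda>x x'. c * dX x x') Y dY"
    then obtain c where "c > 0" "isometric X (\<lambda>x x'. c * dX x x') Y dY" by blast
    then show ?thesis by (rule dGH_bar_eq_0_if_isometric[OF assms(1,4,2)])
  next
    assume "\<exists>y. Y = {y}"
    then obtain y where "Y = {y}" by blast
    moreover have "dY y y = 0" using assms(6) \<open>Y = {y}\<close> unfolding metric_on_def by blast
    ultimately show ?thesis using dGH_bar_singleton[OF assms(1-3)] by simp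
  qed
qed

end
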